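(* Let $X$ be a Hausdorff space and $\mu:X^k\to X$ a continuous $k$-mean that is $\beta$-stable and admits a $\beta$-extension $\tilde\mu$. Then $\tilde\mu$ is a stable extension of $\mu$.
   Context: A $k$-mean is a map $\mu:X^k\to X$ with $\mu(x,\ldots,x)=x$. Barycentric operator $\beta:X^{k+1}\to X^{k+1}$, $\beta(\mathbf{x})_j=\mu(\pi_{\neq j}\mathbf{x})$ with $\pi_{\neq j}(x_1,\ldots,x_{k+1})=(x_1,\ldots,x_{j-1},x_{j+1},\ldots,x_{k+1})$. A $(k+1)$-mean $\tilde\mu$ is a $\beta$-extension of $\mu$ if $\beta^n(\mathbf{x})\to(\tilde\mu(\mathbf{x}),\ldots,\tilde\mu(\mathbf{x}))$ for every $\mathbf{x}$. $\mu$ is $\beta$-stable if for all $\mathbf{x}\in X^{k+1}$: $\pi_{k+1}(\mathbf{x})=\mu(\pi_{\neq k+1}\mathbf{x})$ implies $\pi_{k+1}(\beta(\mathbf{x}))=\mu(\pi_{\neq k+1}(\beta(\mathbf{x})))$, where $\pi_{k+1}$ is the last coordinate. A $(k+1)$-mean $\nu$ is a stable extension of $\mu$ if $\nu(x_1,\ldots,x_k,\mu(x_1,\ldots,x_k))=\mu(x_1,\ldots,x_k)$ for all $x_1,\ldots,x_k\in X$. *)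

theory Defs
  imports "HOL-Analysis.Analysis"
begin

text \<open>Points of X^m are represented as elements of the carrier of the product
topology \<open>product_topology (\<lambda>_. X) {..<m}\<close>, i.e. extensional functions on the
index set {0,...,m-1} (0-based indices) with values in the topspace of X.\<close>

abbreviation power_top :: "'a topology \<Rightarrow> nat \<Rightarrow> (nat \<Rightarrow> 'a) topology" where
  "power_top X m \<equiv> product_topology (\<lambda>_. X) {..<m}"

definition const_tuple :: "nat \<Rightarrow> 'a \<Rightarrow> (nat \<Rightarrow> 'a)" where
  "const_tuple m x = restrict (\<lambda>_. x) {..<m}"

definition is_mean :: "'a topology \<Rightarrow> nat \<Rightarrow> ((nat \<Rightarrow> 'a) \<Rightarrow> 'a) \<Rightarrow> bool" where
  "is_mean X m mu \<longleftrightarrow>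
     (\<forall>x \<in> topspace (power_top X m). mu x \<in> topspace X) \<and>
     (\<forall>x \<in> topspace X. mu (const_tuple m x) = x)"

definition omit :: "nat \<Rightarrow> nat \<Rightarrow> (nat \<Rightarrow> 'a) \<Rightarrow> (nat \<Rightarrow> 'a)" where
  "omit k j x = restrict (\<lambda>i. if i < j then x i else x (Suc i)) {..<k}"

definition bary :: "nat \<Rightarrow> ((nat \<Rightarrow> 'a) \<Rightarrow> 'a) \<Rightarrow> (nat \<Rightarrow> 'a) \<Rightarrow> (nat \<Rightarrow> 'a)" where
  "bary k mu x = restrict (\<lambda>j. mu (omit k j x)) {..<Suc k}"

definition beta_extension ::
  "'a topology \<Rightarrow> nat \<Rightarrow> ((nat \<Rightarrow> 'a) \<Rightarrow> 'a) \<Rightarrow> ((nat \<Rightarrow> 'a) \<Rightarrow> 'a) \<Rightarrow> bool" where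
  "beta_extension X k mu nu \<longleftrightarrow>
     is_mean X (Suc k) nu \<and>
     (\<forall>x \<in> topspace (power_top X (Suc k)).
        limitin (power_top X (Suc k)) (\<lambda>n. (bary k mu ^^ n) x)
                (const_tuple (Suc k) (nu x)) sequentially)"

text \<open>beta-stability; the last coordinate of a (k+1)-tuple has index k.\<close>
definition beta_stable :: "'a topology \<Rightarrow> nat \<Rightarrow> ((nat \<Rightarrow> 'a) \<Rightarrow> 'a) \<Rightarrow> bool" where
  "beta_stable X k mu \<longleftrightarrow>
     (\<forall>x \<in> topspace (power_top X (Suc k)).
        x k = mu (omit k k x) \<longrightarrow> bary k mu x k = mu (omit k k (bary k mu x)))"

definition snoc_tuple :: "nat \<Rightarrow> (nat \<Rightarrow> 'a) \<Rightarrow> 'a \<Rightarrow> (nat \<Rightarrow> 'a)" where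
  "snoc_tuple k x y = restrict (\<lambda>i. if i < k then x i else y) {..<Suc k}"

definition stable_extension ::
  "'a topology \<Rightarrow> nat \<Rightarrow> ((nat \<Rightarrow> 'a) \<Rightarrow> 'a) \<Rightarrow> ((nat \<Rightarrow> 'a) \<Rightarrow> 'a) \<Rightarrow> bool" where
  "stable_extension X k mu nu \<longleftrightarrow>
     is_mean X (Suc k) nu \<and>
     (\<forall>x \<in> topspace (power_top X k). nu (snoc_tuple k x (mu x)) = mu x)"

end

theory Submission
  imports Defs
begin

text \<open>Start from \<open>y = (x, \<mu> x)\<close>. The operator \<open>\<beta>\<close> replaces the last coordinate of a tuple by
  \<open>\<mu>\<close> of the others, so on tuples whose last coordinate already equals \<open>\<mu>\<close> of the others it
  leaves that coordinate unchanged; \<open>\<beta>\<close>-stability says that this relation persists along the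
  orbit. Hence the last coordinate of \<open>\<beta>\<^sup>n y\<close> is \<open>\<mu> x\<close> for every \<open>n\<close>, while it also converges
  to \<open>\<tilde>\<mu> y\<close>; uniqueness of limits in a Hausdorff space gives \<open>\<tilde>\<mu> y = \<mu> x\<close>.\<close>

lemma bary_in_topspace:
  assumes "is_mean X k mu" "x \<in> topspace (power_top X (Suc k))"
  shows "bary k mu x \<in> topspace (power_top X (Suc k))"
proof -
  have "omit k j x \<in> topspace (power_top X k)" for j
    using assms(2) by (auto simp: omit_def PiE_def Pi_def)
  then show ?thesis
    using assms(1) by (auto simp: is_mean_def bary_def PiE_def Pi_def)
qed

lemma bary_last: "bary k mu x k = mu (omit k k x)"
  by (simp add: bary_def)

lemma snoc_tuple_in_topspace:
  assumes "x \<in> topspace (power_top X k)" "y \<in> topspace X"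
  shows "snoc_tuple k x y \<in> topspace (power_top X (Suc k))"
  using assms by (auto simp: snoc_tuple_def PiE_def Pi_def)

lemma omit_last_snoc_tuple:
  assumes "x \<in> topspace (power_top X k)"
  shows "omit k k (snoc_tuple k x y) = x"
  using assms by (auto simp: snoc_tuple_def omit_def PiE_def extensional_def)

lemma snoc_tuple_last: "snoc_tuple k x y k = y"
  by (simp add: snoc_tuple_def)

lemma beta_stable_iterate:
  assumes "is_mean X k mu" "beta_stable X k mu"
    and "x \<in> topspace (power_top X (Suc k))" "x k = mu (omit k k x)"
  shows "(bary k mu ^^ n) x \<in> topspace (power_top X (Suc k))
    \<and> (bary k mu ^^ n) x k = mu (omit k k ((bary k mu ^^ n) x))"
proof (induction n)
  case 0
  then show ?case using assms(3,4) by simp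
next
  case (Suc n)
  then show ?case
    using bary_in_topspace[OF assms(1)] assms(2) by (simp add: beta_stable_def)
qed

lemma beta_stable_iterate_last:
  assumes "is_mean X k mu" "beta_stable X k mu"
    and "x \<in> topspace (power_top X (Suc k))" "x k = mu (omit k k x)"
  shows "(bary k mu ^^ n) x k = x k"
proof (induction n)
  case (Suc n)
  have "(bary k mu ^^ Suc n) x k = mu (omit k k ((bary k mu ^^ n) x))"
    by (simp add: bary_last)
  also have "\<dots> = (bary k mu ^^ n) x k"
    using beta_stable_iterate[OF assms] by simp
  finally show ?case using Suc.IH by simp
qed simp

lemma beta_extension_eq_constant_coordinate:
  assumes "Hausdorff_space X" "beta_extension X k mu nu"
    and "x \<in> topspace (power_top X (Suc k))" "i \<le> k"
    and "\<And>n. (bary k mu ^^ n) x i = x i"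
  shows "nu x = x i"
proof -
  have "limitin (power_top X (Suc k)) (\<lambda>n. (bary k mu ^^ n) x)
          (const_tuple (Suc k) (nu x)) sequentially"
    using assms(2,3) by (simp add: beta_extension_def)
  then have "limitin X (\<lambda>n. (bary k mu ^^ n) x i) (const_tuple (Suc k) (nu x) i) sequentially"
    using assms(4) by (simp add: limitin_componentwise)
  then have to_nu: "limitin X (\<lambda>n. x i) (nu x) sequentially"
    using assms(4,5) by (simp add: const_tuple_def)
  have "x i \<in> topspace X"
    using assms(3,4) by (auto simp: PiE_def Pi_def)
  then have "limitin X (\<lambda>n. x i) (x i) sequentially"
    by simp
  then show ?thesis
    using limitin_Hausdorff_unique[OF to_nu _ _ assms(1)] by simp
qed

theorem proposition8p2:
  fixes X :: "'a topology" and k :: nat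
    and mu :: "(nat \<Rightarrow> 'a) \<Rightarrow> 'a" and nu :: "(nat \<Rightarrow> 'a) \<Rightarrow> 'a"
  assumes "Hausdorff_space X"
    and "is_mean X k mu"
    and "continuous_map (power_top X k) X mu"
    and "beta_stable X k mu"
    and "beta_extension X k mu nu"
  shows "stable_extension X k mu nu"
proof -
  have "nu (snoc_tuple k x (mu x)) = mu x" if x: "x \<in> topspace (power_top X k)" for x
  proof -
    let ?y = "snoc_tuple k x (mu x)"
    have y: "?y \<in> topspace (power_top X (Suc k))"
      using snoc_tuple_in_topspace[OF x] assms(2) x by (simp add: is_mean_def)
    have "?y k = mu (omit k k ?y)"
      using omit_last_snoc_tuple[OF x] by (simp add: snoc_tuple_last)
    then have "(bary k mu ^^ n) ?y k = ?y k" for n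
      using beta_stable_iterate_last[OF assms(2,4) y] by simp
    then have "nu ?y = ?y k"
      using beta_extension_eq_constant_coordinate[OF assms(1,5) y] by simp
    then show ?thesis by (simp add: snoc_tuple_last)
  qed
  then show ?thesis
    using assms(5) by (simp add: beta_extension_def stable_extension_def)
qed

end
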